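(* Let $\Omega\subset\mathbb{R}^2$ be open, $h>0$, $s\in\{1,2\}$, $u\in W^{1,2}(\Omega,\mathbb{R}^2)$, $\rho$ as in the context, and write $d(x)=\det\nabla u(x)$. Then for a.e. $x\in\Omega_h$: (i) $\Delta^{h,s}(\rho'(d)\operatorname{cof}\nabla u)(x)\cdot\Delta^{h,s}\nabla u(x)\ge-\gamma|\Delta^{h,s}\nabla u(x)|^2$; (ii) $|\Delta^{h,s}(\rho'(d)\operatorname{cof}\nabla u)(x)|\le\gamma|\Delta^{h,s}\nabla u(x)|+\frac{2\gamma}{h}|\nabla u(x)|$.
   Context: Fix $\gamma>0$, $s_0\ge0$, $\kappa\ge-\gamma s_0$; $\rho\in C^\infty(\mathbb{R})$ is convex with $\rho(s)=0$ for $s\le0$, $\rho(s)=\gamma s+\kappa$ for $s\ge s_0$ (smooth convex in between), so $0\le\rho'\le\gamma$ and $\rho'$ is nondecreasing. For $A\in\mathbb{R}^{2\times2}$, $\operatorname{cof}A=\begin{pmatrix}a_{22}&-a_{21}\\-a_{12}&a_{11}\end{pmatrix}$; $|\cdot|$, $\cdot$ are Frobenius norm and inner product. $\Omega_h=\{x\in\Omega:\operatorname{dist}(x,\partial\Omega)>h\}$, $e_1,e_2$ the standard basis, and the difference quotient is $\Delta^{h,s}f(x)=h^{-1}(f(x+he_s)-f(x))$. *)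

theory Defs
  imports "HOL-Analysis.Analysis"
begin

text \<open>2x2 matrices are \<open>real^2^2\<close>; \<open>A $ i $ j\<close> is the entry in row i, column j.
 The library norm / inner product on \<open>real^2^2\<close> are the Frobenius ones.\<close>

definition cof :: "real^2^2 \<Rightarrow> real^2^2" where
  "cof A = (\<chi> i j. if i = 1 \<and> j = 1 then A $ 2 $ 2
                 else if i = 1 \<and> j = 2 then - A $ 2 $ 1
                 else if i = 2 \<and> j = 1 then - A $ 1 $ 2
                 else A $ 1 $ 1)"

definition smooth_real :: "(real \<Rightarrow> real) \<Rightarrow> bool" where
  "smooth_real f \<longleftrightarrow> (\<forall>n x. ((deriv ^^ n) f) differentiable (at x))"

definition pderiv2 :: "2 \<Rightarrow> (real^2 \<Rightarrow> real) \<Rightarrow> real^2 \<Rightarrow> real" where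
  "pderiv2 j f x = deriv (\<lambda>t. f (x + t *\<^sub>R axis j 1)) 0"

definition smooth2 :: "(real^2 \<Rightarrow> real) \<Rightarrow> bool" where
  "smooth2 f \<longleftrightarrow> (\<forall>js x. (foldr pderiv2 js f) differentiable (at x))"

definition test_fun :: "(real^2) set \<Rightarrow> (real^2 \<Rightarrow> real) \<Rightarrow> bool" where
  "test_fun \<Omega> \<phi> \<longleftrightarrow> smooth2 \<phi> \<and> compact (closure {x. \<phi> x \<noteq> 0})
      \<and> closure {x. \<phi> x \<noteq> 0} \<subseteq> \<Omega>"

text \<open>u is in W^{1,2}(\<Omega>,R^2) with weak gradient G, (G x) $ i $ j = \<partial>_j u_i.\<close>
definition sobolev12_grad :: "(real^2) set \<Rightarrow> (real^2 \<Rightarrow> real^2) \<Rightarrow> (real^2 \<Rightarrow> real^2^2) \<Rightarrow> bool" where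
  "sobolev12_grad \<Omega> u G \<longleftrightarrow>
     (\<lambda>x. indicator \<Omega> x *\<^sub>R u x) \<in> borel_measurable lebesgue \<and>
     (\<lambda>x. indicator \<Omega> x *\<^sub>R G x) \<in> borel_measurable lebesgue \<and>
     set_integrable lebesgue \<Omega> (\<lambda>x. (norm (u x))\<^sup>2) \<and>
     set_integrable lebesgue \<Omega> (\<lambda>x. (norm (G x))\<^sup>2) \<and>
     (\<forall>\<phi> i j. test_fun \<Omega> \<phi> \<longrightarrow>
        (LINT x:\<Omega>|lebesgue. u x $ i * pderiv2 j \<phi> x)
          = - (LINT x:\<Omega>|lebesgue. G x $ i $ j * \<phi> x))"

text \<open>\<Omega>_h = {x \<in> \<Omega>. dist(x, \<partial>\<Omega>) > h}, with dist to the empty set = +\<infinity>.\<close>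
definition inner_set :: "(real^2) set \<Rightarrow> real \<Rightarrow> (real^2) set" where
  "inner_set \<Omega> h = {x \<in> \<Omega>. frontier \<Omega> = {} \<or> infdist x (frontier \<Omega>) > h}"

definition diffq :: "real \<Rightarrow> 2 \<Rightarrow> (real^2 \<Rightarrow> 'a::real_vector) \<Rightarrow> real^2 \<Rightarrow> 'a" where
  "diffq h s f x = (1 / h) *\<^sub>R (f (x + h *\<^sub>R axis s 1) - f x)"

definition rho_ok :: "real \<Rightarrow> real \<Rightarrow> real \<Rightarrow> (real \<Rightarrow> real) \<Rightarrow> bool" where
  "rho_ok \<gamma> s0 \<kappa> \<rho> \<longleftrightarrow> \<gamma> > 0 \<and> s0 \<ge> 0 \<and> \<kappa> \<ge> - \<gamma> * s0 \<and>
     smooth_real \<rho> \<and> convex_on UNIV \<rho> \<and>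
     (\<forall>t\<le>0. \<rho> t = 0) \<and> (\<forall>t\<ge>s0. \<rho> t = \<gamma> * t + \<kappa>)"

end

theory Submission
  imports Defs
begin

text \<open>Write \<open>A = \<nabla>u(x)\<close>, \<open>B = \<nabla>u(x + h e\<^sub>s)\<close>, \<open>p = \<rho>'(det A)\<close>, \<open>q = \<rho>'(det B)\<close>.
  Since \<open>det\<close> is quadratic with polarisation \<open>cof\<close>, the pairing \<open>(q cof B - p cof A) \<bullet> (B - A)\<close>
  equals \<open>(q - p)(det B - det A) + (q + p) det (B - A)\<close>: the first term is nonnegative because
  \<open>\<rho>'\<close> is nondecreasing, the second is at least \<open>-\<gamma> |B - A|\<^sup>2\<close> because \<open>0 \<le> \<rho>' \<le> \<gamma>\<close> and
  \<open>|det H| \<le> |H|\<^sup>2/2\<close>. The size estimate follows from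
  \<open>q cof B - p cof A = q cof (B - A) + (q - p) cof A\<close> and \<open>|cof H| = |H|\<close>.
  Both estimates hold at every point.\<close>

lemma inner_mat2_eq:
  "(M::real^2^2) \<bullet> N = M$1$1 * N$1$1 + M$1$2 * N$1$2 + M$2$1 * N$2$1 + M$2$2 * N$2$2"
  by (simp add: inner_vec_def sum_2)

lemma cof_nth [simp]:
  "cof A $ 1 $ 1 = A $ 2 $ 2" "cof A $ 1 $ 2 = - A $ 2 $ 1"
  "cof A $ 2 $ 1 = - A $ 1 $ 2" "cof A $ 2 $ 2 = A $ 1 $ 1"
  by (simp_all add: cof_def)

lemma cof_diff: "cof (A - B) = cof A - cof B"
  by (simp add: vec_eq_iff forall_2)

lemma norm_cof [simp]: "norm (cof A) = norm A"
  by (simp add: norm_eq_sqrt_inner inner_mat2_eq algebra_simps)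

lemma abs_det2_le: "\<bar>det (A::real^2^2)\<bar> \<le> (norm A)\<^sup>2 / 2"
proof -
  have entrywise: "2 * \<bar>a * d - b * c\<bar> \<le> a\<^sup>2 + b\<^sup>2 + c\<^sup>2 + d\<^sup>2" for a b c d :: real
  proof -
    have "2 * \<bar>a * d - b * c\<bar> \<le> 2 * \<bar>a\<bar> * \<bar>d\<bar> + 2 * \<bar>b\<bar> * \<bar>c\<bar>"
      using abs_triangle_ineq4[of "a * d" "b * c"] by (simp add: abs_mult)
    also have "\<dots> \<le> (\<bar>a\<bar>\<^sup>2 + \<bar>d\<bar>\<^sup>2) + (\<bar>b\<bar>\<^sup>2 + \<bar>c\<bar>\<^sup>2)"
      by (intro add_mono sum_squares_bound)
    finally show ?thesis by simp
  qed
  have "2 * \<bar>det A\<bar> \<le> (A$1$1)\<^sup>2 + (A$1$2)\<^sup>2 + (A$2$1)\<^sup>2 + (A$2$2)\<^sup>2"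
    using entrywise[where a = "A$1$1" and b = "A$1$2" and c = "A$2$1" and d = "A$2$2"]
    by (simp add: det_2)
  moreover have "(norm A)\<^sup>2 = (A$1$1)\<^sup>2 + (A$1$2)\<^sup>2 + (A$2$1)\<^sup>2 + (A$2$2)\<^sup>2"
    unfolding power2_norm_eq_inner by (simp add: inner_mat2_eq power2_eq_square)
  ultimately show ?thesis
    by simp
qed

lemma convex_deriv_mono:
  fixes f :: "real \<Rightarrow> real"
  assumes "convex_on UNIV f" and "\<And>x. (f has_real_derivative f' x) (at x)" and "x \<le> y"
  shows "f' x \<le> f' y"
proof -
  have "f y - f x \<ge> f' x * (y - x)" "f x - f y \<ge> f' y * (x - y)"
    using assms(1,2) by (auto intro!: convex_on_imp_above_tangent)
  then have "(f' y - f' x) * (y - x) \<ge> 0" by (simp add: algebra_simps)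
  with \<open>x \<le> y\<close> show ?thesis
    by (cases "x = y") (auto simp: zero_le_mult_iff)
qed

lemma rho_ok_deriv:
  assumes "rho_ok \<gamma> s0 \<kappa> \<rho>"
  shows "mono (deriv \<rho>)" and "\<And>t. 0 \<le> deriv \<rho> t" and "\<And>t. deriv \<rho> t \<le> \<gamma>"
proof -
  have "smooth_real \<rho>" and "convex_on UNIV \<rho>"
    and zero: "\<And>t. t \<le> 0 \<Longrightarrow> \<rho> t = 0" and linear: "\<And>t. t \<ge> s0 \<Longrightarrow> \<rho> t = \<gamma> * t + \<kappa>"
    using assms by (auto simp: rho_ok_def)
  have D: "(\<rho> has_real_derivative deriv \<rho> x) (at x)" for x
    using \<open>smooth_real \<rho>\<close> unfolding smooth_real_def
    by (metis DERIV_deriv_iff_real_differentiable funpow_0)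
  have mono: "deriv \<rho> x \<le> deriv \<rho> y" if "x \<le> y" for x y
    using convex_deriv_mono[OF \<open>convex_on UNIV \<rho>\<close> D that] .
  then show "mono (deriv \<rho>)" by (rule monoI)
  have flat: "deriv \<rho> t = 0" if "t < 0" for t
  proof (rule DERIV_unique[OF D])
    show "(\<rho> has_real_derivative 0) (at t)"
      by (rule has_field_derivative_transform_within_open[of "\<lambda>_. 0" _ _ "{..<0}"])
         (use zero that in auto)
  qed
  show "0 \<le> deriv \<rho> t" for t
    using mono[of "min t 0 - 1" t] flat[of "min t 0 - 1"] by simp
  have on_linear_part: "deriv \<rho> t = \<gamma>" if "t > s0" for t
  proof (rule DERIV_unique[OF D])
    show "(\<rho> has_real_derivative \<gamma>) (at t)"
      by (rule has_field_derivative_transform_within_open[of "\<lambda>t. \<gamma> * t + \<kappa>" _ _ "{s0<..}"])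
         (use linear that in \<open>auto intro!: derivative_eq_intros\<close>)
  qed
  show "deriv \<rho> t \<le> \<gamma>" for t
    using mono[of t "max t s0 + 1"] on_linear_part[of "max t s0 + 1"] by simp
qed

lemma cof_inner_diff_eq:
  fixes A B :: "real^2^2"
  shows "(q *\<^sub>R cof B - p *\<^sub>R cof A) \<bullet> (B - A)
           = (q - p) * (det B - det A) + (q + p) * det (B - A)"
  by (simp add: inner_mat2_eq det_2 algebra_simps)

lemma mono_scaled_cof_inner_diff_ge:
  fixes A B :: "real^2^2" and D :: "real \<Rightarrow> real"
  assumes "\<And>t. 0 \<le> D t" and "\<And>t. D t \<le> \<gamma>" and "mono D"
  shows "(D (det B) *\<^sub>R cof B - D (det A) *\<^sub>R cof A) \<bullet> (B - A) \<ge> - \<gamma> * (norm (B - A))\<^sup>2"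
proof -
  have "(D (det B) - D (det A)) * (det B - det A) \<ge> 0"
    using \<open>mono D\<close> by (cases "det A \<le> det B") (auto simp: monoD mult_nonpos_nonpos)
  moreover have "\<bar>(D (det B) + D (det A)) * det (B - A)\<bar> \<le> (2 * \<gamma>) * ((norm (B - A))\<^sup>2 / 2)"
    unfolding abs_mult
    using assms(1,2)[of "det A"] assms(1,2)[of "det B"] by (intro mult_mono abs_det2_le) auto
  ultimately show ?thesis
    unfolding cof_inner_diff_eq by (simp add: abs_le_iff)
qed

lemma norm_scaled_cof_diff_le:
  fixes A B :: "real^2^2" and D :: "real \<Rightarrow> real"
  assumes "\<And>t. 0 \<le> D t" and "\<And>t. D t \<le> \<gamma>"
  shows "norm (D (det B) *\<^sub>R cof B - D (det A) *\<^sub>R cof A) \<le> \<gamma> * norm (B - A) + \<gamma> * norm A"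
proof -
  let ?p = "D (det A)" and ?q = "D (det B)"
  have "?q *\<^sub>R cof B - ?p *\<^sub>R cof A = ?q *\<^sub>R cof (B - A) + (?q - ?p) *\<^sub>R cof A"
    by (simp add: cof_diff algebra_simps)
  then have "norm (?q *\<^sub>R cof B - ?p *\<^sub>R cof A) \<le> norm (?q *\<^sub>R cof (B - A)) + norm ((?q - ?p) *\<^sub>R cof A)"
    by (simp only: norm_triangle_ineq)
  also have "\<dots> = \<bar>?q\<bar> * norm (B - A) + \<bar>?q - ?p\<bar> * norm A"
    by simp
  also have "\<dots> \<le> \<gamma> * norm (B - A) + \<gamma> * norm A"
    using assms[of "det A"] assms[of "det B"] by (intro add_mono mult_right_mono) auto
  finally show ?thesis .
qed

lemma inner_diffq:
  "diffq h s F x \<bullet> diffq h s G x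
     = (F (x + h *\<^sub>R axis s 1) - F x) \<bullet> (G (x + h *\<^sub>R axis s 1) - G x) / h\<^sup>2"
  by (simp add: diffq_def power2_eq_square)

lemma norm_diffq:
  "norm (diffq h s F x) = norm (F (x + h *\<^sub>R axis s 1) - F x) / \<bar>h\<bar>"
  by (simp add: diffq_def)

theorem lemma4p1:
  fixes \<Omega> :: "(real^2) set" and h \<gamma> s0 \<kappa> :: real and s :: 2
    and \<rho> :: "real \<Rightarrow> real" and u :: "real^2 \<Rightarrow> real^2" and Du :: "real^2 \<Rightarrow> real^2^2"
  assumes "open \<Omega>" and "h > 0"
    and "rho_ok \<gamma> s0 \<kappa> \<rho>"
    and "sobolev12_grad \<Omega> u Du"
  shows "AE x in lebesgue. x \<in> inner_set \<Omega> h \<longrightarrow>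
      (let F = (\<lambda>y. deriv \<rho> (det (Du y)) *\<^sub>R cof (Du y)) in
        diffq h s F x \<bullet> diffq h s Du x \<ge> - \<gamma> * (norm (diffq h s Du x))\<^sup>2 \<and>
        norm (diffq h s F x) \<le> \<gamma> * norm (diffq h s Du x) + (2 * \<gamma> / h) * norm (Du x))"
proof (rule AE_I2, intro impI)
  fix x
  define D where "D = deriv \<rho>"
  define F where "F = (\<lambda>y. D (det (Du y)) *\<^sub>R cof (Du y))"
  define A where "A = Du x"
  define B where "B = Du (x + h *\<^sub>R axis s 1)"
  have "mono D" and D_ge: "\<And>t. 0 \<le> D t" and D_le: "\<And>t. D t \<le> \<gamma>"
    using rho_ok_deriv[OF assms(3)] by (simp_all add: D_def)
  have norm_diffq_Du: "norm (diffq h s Du x) = norm (B - A) / h"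
    using \<open>h > 0\<close> by (simp add: norm_diffq A_def B_def)
  have "- \<gamma> * (norm (diffq h s Du x))\<^sup>2 = - \<gamma> * (norm (B - A))\<^sup>2 / h\<^sup>2"
    by (simp add: norm_diffq_Du power_divide)
  also have "\<dots> \<le> (D (det B) *\<^sub>R cof B - D (det A) *\<^sub>R cof A) \<bullet> (B - A) / h\<^sup>2"
    by (intro divide_right_mono mono_scaled_cof_inner_diff_ge D_ge D_le \<open>mono D\<close>) simp
  also have "\<dots> = diffq h s F x \<bullet> diffq h s Du x"
    by (simp add: inner_diffq F_def A_def B_def)
  finally have inner_bound: "diffq h s F x \<bullet> diffq h s Du x \<ge> - \<gamma> * (norm (diffq h s Du x))\<^sup>2" .
  have "norm (diffq h s F x) = norm (D (det B) *\<^sub>R cof B - D (det A) *\<^sub>R cof A) / h"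
    using \<open>h > 0\<close> by (simp add: norm_diffq F_def A_def B_def)
  also have "\<dots> \<le> (\<gamma> * norm (B - A) + \<gamma> * norm A) / h"
    using \<open>h > 0\<close> by (intro divide_right_mono norm_scaled_cof_diff_le D_ge D_le) simp
  also have "\<dots> \<le> \<gamma> * norm (diffq h s Du x) + (2 * \<gamma> / h) * norm (Du x)"
    using \<open>h > 0\<close> D_ge[of 0] D_le[of 0]
    by (simp add: norm_diffq_Du add_divide_distrib A_def divide_right_mono)
  finally have norm_bound: "norm (diffq h s F x) \<le> \<gamma> * norm (diffq h s Du x) + (2 * \<gamma> / h) * norm (Du x)" .
  show "let F = (\<lambda>y. deriv \<rho> (det (Du y)) *\<^sub>R cof (Du y)) in
        diffq h s F x \<bullet> diffq h s Du x \<ge> - \<gamma> * (norm (diffq h s Du x))\<^sup>2 \<and>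
        norm (diffq h s F x) \<le> \<gamma> * norm (diffq h s Du x) + (2 * \<gamma> / h) * norm (Du x)"
    using inner_bound norm_bound by (simp add: Let_def F_def D_def)
qed

end
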